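(* Let $d\ge 2$ and $\nu=\delta_1$ (the Dirac mass at $1$). Then, in the continuous greedy paths model driven by $\nu$, $\mathbb{E}S<+\infty$.
   Context: Let $\xi$ be a Poisson point process on $\mathbb{R}^d\times(0,+\infty)$ with intensity the product of Lebesgue measure on $\mathbb{R}^d$ and the finite measure $\nu$, and let $\Xi$ be its projection on $\mathbb{R}^d$. For $x\in\Xi$, $r(x)$ denotes the (a.s. unique) positive real with $(x,r(x))\in\xi$; for $x\notin\Xi$, $r(x)=0$. A path is a finite sequence $\pi=(x_0,\dots,x_n)$ of distinct points of $\mathbb{R}^d$; its length $|\pi|=\sum_{i=0}^{n-1}\|x_{i+1}-x_i\|$ (Euclidean norm), and its weight $A(\pi)=\sum_{i=0}^n r(x_i)$. Define $S=\sup\{A(\pi)/|\pi|\}$, the supremum over all paths with $x_0=0$ and $|\pi|>0$ (working on the a.s. event $0\notin\Xi$). *)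

theory Defs
  imports "HOL-Analysis.Analysis" "HOL-Probability.Probability"
begin

definition poisson_point_process ::
  "'b measure \<Rightarrow> ('b \<Rightarrow> 'p set) \<Rightarrow> 'p measure \<Rightarrow> bool" where
  "poisson_point_process M Xi mu \<longleftrightarrow>
     prob_space M \<and>
     (\<forall>B \<in> sets mu. emeasure mu B < \<infinity> \<longrightarrow>
        (AE \<omega> in M. finite (Xi \<omega> \<inter> B)) \<and>
        (\<lambda>\<omega>. card (Xi \<omega> \<inter> B)) \<in> measurable M (count_space UNIV) \<and>
        (\<forall>k::nat. measure M {\<omega> \<in> space M. card (Xi \<omega> \<inter> B) = k}
            = (measure mu B) ^ k / fact k * exp (- measure mu B))) \<and>
     (\<forall>(I::nat set) (B::nat \<Rightarrow> 'p set). finite I \<longrightarrow>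
        (\<forall>i\<in>I. B i \<in> sets mu \<and> emeasure mu (B i) < \<infinity>) \<longrightarrow>
        disjoint_family_on B I \<longrightarrow>
        prob_space.indep_vars M (\<lambda>_. count_space UNIV)
           (\<lambda>i \<omega>. card (Xi \<omega> \<inter> B i)) I)"

text \<open>Greedy paths model.  xi is the (marked) point set in R^d x (0,inf).\<close>

definition mark :: "('a \<times> real) set \<Rightarrow> 'a \<Rightarrow> real" where
  "mark xi x = (if \<exists>t. (x, t) \<in> xi then (SOME t. (x, t) \<in> xi) else 0)"

definition path_length :: "'a::real_normed_vector list \<Rightarrow> real" where
  "path_length p = sum_list (map (\<lambda>(x, y). norm (y - x)) (zip p (tl p)))"

definition path_weight :: "('a \<times> real) set \<Rightarrow> 'a list \<Rightarrow> real" where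
  "path_weight xi p = sum_list (map (mark xi) p)"

definition origin_paths :: "'a::real_normed_vector list set" where
  "origin_paths = {p. p \<noteq> [] \<and> distinct p \<and> hd p = 0 \<and> path_length p > 0}"

definition greedy_S :: "('a::real_normed_vector \<times> real) set \<Rightarrow> ennreal" where
  "greedy_S xi = (SUP p \<in> origin_paths. ennreal (path_weight xi p / path_length p))"

end

theory Submission
  imports Defs
begin

text \<open>Since all marks equal 1, the weight of a path is the number of points of the process
  on it. Cut space into cubes of side 1/K. A path from the origin of length L through N points
  is shadowed by a king walk on the lattice with at most K L + N steps whose visited cubes
  contain all N points. So if weight/length is at least K, some king walk with 2 N steps sees
  at least N points in the union of its at most 2 N + 1 cubes, a region of volume at most
  (2 N + 1) / K^d. There are at most 9^(d N) such walks, and by the Poisson tail bound each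
  one sees N points with probability at most ((2 N + 1) / K^d)^N / N!. For d \<ge> 2 the sum over
  walks and N is O(1/K^2), so S \<le> 1 + \<Sum>j 2^(j+1) 1{S \<ge> 2^j} has finite expectation.\<close>

lemma abs_floor_diff_le:
  fixes a b :: real
  shows "\<bar>\<lfloor>a\<rfloor> - \<lfloor>b\<rfloor>\<bar> \<le> \<lceil>\<bar>a - b\<bar>\<rceil>"
proof -
  have "real_of_int \<bar>\<lfloor>a\<rfloor> - \<lfloor>b\<rfloor>\<bar> < real_of_int (\<lceil>\<bar>a - b\<bar>\<rceil> + 1)"
    using floor_correct[of a] floor_correct[of b] le_of_int_ceiling[of "\<bar>a - b\<bar>"]
      abs_ge_self[of "a - b"] abs_ge_minus_self[of "a - b"]
    unfolding of_int_abs of_int_diff of_int_add of_int_1 abs_less_iff by linarith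
  then show ?thesis
    by (simp only: of_int_less_iff)
qed

lemma ex_dyadic_bracket:
  fixes s :: real
  assumes "s \<ge> 1"
  shows "\<exists>j. 2 ^ j \<le> s \<and> s < 2 ^ Suc j"
proof -
  define j where "j = nat \<lfloor>log 2 s\<rfloor>"
  have "\<lfloor>log 2 s\<rfloor> = int j"
    using assms by (simp add: j_def)
  then have "2 powr real j \<le> s \<and> s < 2 powr (real j + 1)"
    using floor_log_eq_powr_iff[of s 2 "int j"] assms by simp
  then show ?thesis
    by (auto simp: powr_add powr_realpow)
qed

lemma power_div_fact_le_exp:
  fixes x :: real
  assumes "x \<ge> 0"
  shows "x ^ n / fact n \<le> exp x"
proof -
  obtain t where "exp x = (\<Sum>k<Suc n. x ^ k / fact k) + exp t / fact (Suc n) * x ^ Suc n"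
    using Maclaurin_exp_le[of x "Suc n"] by blast
  moreover have "x ^ n / fact n \<le> (\<Sum>k<Suc n. x ^ k / fact k)"
    using assms by (intro member_le_sum) auto
  moreover have "0 \<le> exp t / fact (Suc n) * x ^ Suc n"
    using assms by simp
  ultimately show ?thesis
    by linarith
qed

lemma power_linear_div_fact_le:
  fixes c :: real
  assumes "m > 0" "c \<ge> 0"
  shows "(real (2 * m + 1) * c) ^ m / fact m \<le> (3 * exp 1 * c) ^ m"
proof -
  have "real (2 * m + 1) * c \<le> (3 * real m) * c"
    using assms by (intro mult_right_mono) auto
  then have "(real (2 * m + 1) * c) ^ m \<le> (3 * real m * c) ^ m"
    using assms by (intro power_mono) auto
  also have "\<dots> = (3 * c) ^ m * real m ^ m"
    by (simp add: power_mult_distrib ac_simps)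
  finally have "(real (2 * m + 1) * c) ^ m / fact m \<le> (3 * c) ^ m * (real m ^ m / fact m)"
    by (simp add: divide_right_mono)
  also have "\<dots> \<le> (3 * c) ^ m * exp (real m)"
    using assms by (intro mult_left_mono power_div_fact_le_exp) auto
  also have "\<dots> = (3 * exp 1 * c) ^ m"
    using exp_of_nat_mult[of m "1::real"] by (simp add: power_mult_distrib)
  finally show ?thesis .
qed

lemma poisson_tail_le:
  fixes m :: real
  assumes "m \<ge> 0"
  shows "1 - exp (- m) * (\<Sum>k<n. m ^ k / fact k) \<le> m ^ n / fact n"
proof -
  obtain t where t: "\<bar>t\<bar> \<le> \<bar>m\<bar>" "exp m = (\<Sum>k<n. m ^ k / fact k) + exp t / fact n * m ^ n"
    using Maclaurin_exp_le[of m n] by blast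
  have "1 - exp (- m) * (\<Sum>k<n. m ^ k / fact k) = exp (- m) * (exp m - (\<Sum>k<n. m ^ k / fact k))"
    by (simp add: right_diff_distrib exp_minus_inverse mult.commute)
  also have "\<dots> = exp (- m) * (exp t / fact n * m ^ n)"
    using t(2) by simp
  also have "\<dots> = exp (t - m) * (m ^ n / fact n)"
    by (simp add: exp_diff exp_minus field_simps)
  also have "\<dots> \<le> m ^ n / fact n"
    using t(1) assms by (intro mult_left_le_one_le) auto
  finally show ?thesis .
qed

lemma card_le_card_Int_Times_UNIV:
  assumes "S \<subseteq> fst ` X" "S \<subseteq> A" "finite (X \<inter> A \<times> UNIV)"
  shows "card S \<le> card (X \<inter> A \<times> UNIV)"
proof -
  have "S \<subseteq> fst ` (X \<inter> A \<times> UNIV)"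
    using assms(1,2) by force
  then have "card S \<le> card (fst ` (X \<inter> A \<times> UNIV))"
    using assms(3) by (intro card_mono) auto
  also have "\<dots> \<le> card (X \<inter> A \<times> UNIV)"
    using assms(3) by (rule card_image_le)
  finally show ?thesis .
qed

lemma emeasure_pair_return_Times:
  assumes "A \<in> sets M" "B \<in> sets N" "x \<in> space N"
  shows "emeasure (M \<Otimes>\<^sub>M return N x) (A \<times> B) = emeasure M A * indicator B x"
proof -
  interpret sigma_finite_measure "return N x"
    using assms(3) by (intro prob_space_imp_sigma_finite prob_space_return)
  show ?thesis
    using assms by (simp add: emeasure_pair_measure_Times)
qed

lemma nn_integral_dyadic_indicator_sum_finite:
  fixes c :: real
  assumes "c \<ge> 0" and "\<And>j. E j \<in> sets M" and "\<And>j. emeasure M (E j) \<le> ennreal (c / (2 ^ j)\<^sup>2)"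
  shows "(\<integral>\<^sup>+\<omega>. (\<Sum>j. ennreal (2 ^ Suc j) * indicator (E j) \<omega>) \<partial>M) < \<infinity>"
proof -
  have "(\<integral>\<^sup>+\<omega>. (\<Sum>j. ennreal (2 ^ Suc j) * indicator (E j) \<omega>) \<partial>M)
          = (\<Sum>j. ennreal (2 ^ Suc j) * emeasure M (E j))"
    using assms(2) by (subst nn_integral_suminf) (auto simp: nn_integral_cmult_indicator)
  also have "\<dots> \<le> (\<Sum>j. ennreal (2 * c * (1 / 2) ^ j))"
  proof (rule suminf_le)
    fix j :: nat
    have "ennreal (2 ^ Suc j) * emeasure M (E j) \<le> ennreal (2 ^ Suc j) * ennreal (c / (2 ^ j)\<^sup>2)"
      by (intro mult_left_mono assms(3)) simp
    also have "\<dots> = ennreal (2 ^ Suc j * (c / (2 ^ j)\<^sup>2))"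
      by (rule ennreal_mult'[symmetric]) simp
    also have "2 ^ Suc j * (c / (2 ^ j)\<^sup>2) = 2 * c * (1 / 2 :: real) ^ j"
      by (simp add: power2_eq_square power_one_over field_simps)
    finally show "ennreal (2 ^ Suc j) * emeasure M (E j) \<le> ennreal (2 * c * (1 / 2) ^ j)" .
  qed (rule summableI)+
  also have "\<dots> < \<infinity>"
  proof -
    have "summable (\<lambda>j. 2 * c * (1 / 2 :: real) ^ j)"
      by (intro summable_mult summable_geometric) simp
    then have "(\<Sum>j. ennreal (2 * c * (1 / 2) ^ j)) \<noteq> top"
      using assms(1) by (intro ennreal_suminf_neq_top) auto
    then show ?thesis
      by (simp add: less_top)
  qed
  finally show ?thesis .
qed

section \<open>Paths\<close>

lemma path_length_Nil [simp]: "path_length [] = 0"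
  by (simp add: path_length_def)

lemma path_length_singleton [simp]: "path_length [x] = 0"
  by (simp add: path_length_def)

lemma path_length_Cons_Cons [simp]:
  "path_length (x # y # ys) = norm (y - x) + path_length (y # ys)"
  by (simp add: path_length_def)

lemma path_length_Cons_le:
  "path_length (x # ys) \<le> norm (y - x) + path_length (y # ys)"
proof (cases ys)
  case (Cons z zs)
  then show ?thesis using norm_triangle_ineq[of "y - x" "z - y"] by simp
qed simp

lemma path_length_filter_le: "path_length (x # filter P xs) \<le> path_length (x # xs)"
proof (induction xs arbitrary: x)
  case (Cons y ys)
  show ?case
  proof (cases "P y")
    case False
    then have "path_length (x # filter P (y # ys)) \<le> path_length (x # ys)"
      using Cons.IH by simp
    also have "\<dots> \<le> path_length (x # y # ys)"
      using path_length_Cons_le by simp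
    finally show ?thesis .
  qed (simp add: Cons.IH)
qed simp

lemma mark_le_of_bool:
  assumes "\<And>x t. (x, t) \<in> xi \<Longrightarrow> t \<le> 1"
  shows "mark xi x \<le> of_bool (x \<in> fst ` xi)"
  using assms someI_ex[of "\<lambda>t. (x, t) \<in> xi"] by (force simp: mark_def)

lemma path_weight_le_length_filter:
  assumes "\<And>x t. (x, t) \<in> xi \<Longrightarrow> t \<le> 1"
  shows "path_weight xi p \<le> length (filter (\<lambda>x. x \<in> fst ` xi) p)"
proof -
  have "path_weight xi p \<le> (\<Sum>x\<leftarrow>p. of_bool (x \<in> fst ` xi))"
    unfolding path_weight_def using mark_le_of_bool[OF assms] by (rule sum_list_mono)
  also have "\<dots> = length (filter (\<lambda>x. x \<in> fst ` xi) p)"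
    by (induction p) auto
  finally show ?thesis .
qed

lemma marked_points_of_heavy_path:
  fixes xi :: "('a::real_normed_vector \<times> real) set"
  assumes "K > 0" and marks: "\<And>x t. (x, t) \<in> xi \<Longrightarrow> t \<le> 1"
    and p: "p \<in> origin_paths" and ratio: "K \<le> path_weight xi p / path_length p"
  defines "ys \<equiv> filter (\<lambda>x. x \<in> fst ` xi) p"
  shows "K * path_length (0 # ys) \<le> length ys" and "ys \<noteq> []"
proof -
  obtain p' where p': "p = 0 # p'" and L: "path_length p > 0"
    using p by (cases p) (auto simp: origin_paths_def)
  have "K * path_length p \<le> path_weight xi p"
    using ratio L by (simp add: le_divide_eq)
  also have "\<dots> \<le> length ys"
    unfolding ys_def using marks by (rule path_weight_le_length_filter)
  finally have KL: "K * path_length p \<le> length ys" .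
  have "path_length (0 # ys) \<le> path_length (0 # p)"
    unfolding ys_def by (rule path_length_filter_le)
  also have "\<dots> = path_length p"
    using p' by simp
  finally show "K * path_length (0 # ys) \<le> length ys"
    using KL \<open>K > 0\<close> by (meson mult_left_mono order.trans less_imp_le)
  show "ys \<noteq> []"
    using KL mult_pos_pos[OF \<open>K > 0\<close> L] by auto
qed

section \<open>King walks and the cubes they visit\<close>

definition king_steps :: "(int ^ 'd) set" where
  "king_steps = {s. \<forall>j. \<bar>s $ j\<bar> \<le> 1}"

text \<open>A walk on the lattice is the list of its steps; it starts at the origin.\<close>

definition king_walks :: "nat \<Rightarrow> (int ^ 'd) list set" where
  "king_walks n = {w. set w \<subseteq> king_steps \<and> length w = n}"

definition visited :: "(int ^ 'd) list \<Rightarrow> (int ^ 'd) set" where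
  "visited w = (\<lambda>t. sum_list (take t w)) ` {..length w}"

lemma finite_visited: "finite (visited w)"
  by (simp add: visited_def)

lemma card_visited_le: "card (visited w) \<le> length w + 1"
  unfolding visited_def using card_image_le[of "{..length w}"] by simp

lemma sum_list_mem_visited: "sum_list w \<in> visited w"
  unfolding visited_def by (auto intro!: image_eqI[of _ _ "length w"])

lemma visited_append_left: "visited w1 \<subseteq> visited (w1 @ w2)"
proof
  fix p assume "p \<in> visited w1"
  then obtain t where "t \<le> length w1" "p = sum_list (take t w1)"
    unfolding visited_def by auto
  then show "p \<in> visited (w1 @ w2)"
    unfolding visited_def by (auto intro!: image_eqI[of _ _ t])
qed

lemma visited_append_right:
  assumes "p \<in> visited w2"
  shows "sum_list w1 + p \<in> visited (w1 @ w2)"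
proof -
  obtain t where "t \<le> length w2" "p = sum_list (take t w2)"
    using assms unfolding visited_def by auto
  then show ?thesis
    unfolding visited_def by (auto intro!: image_eqI[of _ _ "length w1 + t"])
qed

lemma king_walk_exists:
  fixes \<Delta> :: "int ^ 'd"
  assumes "\<And>j. \<bar>\<Delta> $ j\<bar> \<le> int m"
  shows "\<exists>w. length w = m \<and> set w \<subseteq> king_steps \<and> sum_list w = \<Delta>"
  using assms
proof (induction m arbitrary: \<Delta>)
  case 0
  then have "\<Delta> = 0" by (simp add: vec_eq_iff)
  then show ?case by simp
next
  case (Suc m)
  define s :: "int ^ 'd" where "s = (\<chi> j. sgn (\<Delta> $ j))"
  have "\<bar>(\<Delta> - s) $ j\<bar> \<le> int m" for j
    using Suc.prems[of j] by (auto simp: s_def sgn_if)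
  then obtain w where "length w = m" "set w \<subseteq> king_steps" "sum_list w = \<Delta> - s"
    using Suc.IH by blast
  moreover have "s \<in> king_steps"
    by (auto simp: king_steps_def s_def sgn_if)
  ultimately show ?case by (intro exI[of _ "s # w"]) auto
qed

lemma finite_king_steps: "finite (king_steps :: (int ^ 'd) set)"
  and card_king_steps_le: "card (king_steps :: (int ^ 'd) set) \<le> 3 ^ CARD('d)"
proof -
  let ?C = "(UNIV :: 'd set) \<rightarrow>\<^sub>E {-1..1::int}"
  have sub: "(king_steps :: (int ^ 'd) set) \<subseteq> vec_lambda ` ?C"
  proof
    fix s :: "int ^ 'd" assume "s \<in> king_steps"
    then have "vec_nth s \<in> ?C"
      by (auto simp: king_steps_def abs_le_iff)
    then show "s \<in> vec_lambda ` ?C"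
      by (metis image_eqI vec_nth_inverse)
  qed
  have "finite ?C"
    by (intro finite_PiE) auto
  then show "finite (king_steps :: (int ^ 'd) set)"
    using sub by (metis finite_imageI finite_subset)
  have "card (king_steps :: (int ^ 'd) set) \<le> card (vec_lambda ` ?C)"
    using sub \<open>finite ?C\<close> by (intro card_mono) auto
  also have "\<dots> \<le> card ?C"
    using \<open>finite ?C\<close> by (rule card_image_le)
  finally show "card (king_steps :: (int ^ 'd) set) \<le> 3 ^ CARD('d)"
    by (simp add: card_PiE)
qed

lemma finite_king_walks: "finite (king_walks n :: (int ^ 'd) list set)"
  unfolding king_walks_def using finite_king_steps by (rule finite_lists_length_eq)

lemma card_king_walks_le: "card (king_walks n :: (int ^ 'd) list set) \<le> 3 ^ (CARD('d) * n)"
proof -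
  have "card (king_walks n :: (int ^ 'd) list set) = card (king_steps :: (int ^ 'd) set) ^ n"
    unfolding king_walks_def using finite_king_steps by (rule card_lists_length_eq)
  also have "\<dots> \<le> (3 ^ CARD('d)) ^ n"
    using card_king_steps_le by (rule power_mono) simp
  finally show ?thesis
    by (simp add: power_mult)
qed

definition cell_index :: "real \<Rightarrow> real ^ 'd \<Rightarrow> int ^ 'd" where
  "cell_index K y = (\<chi> j. \<lfloor>K * y $ j\<rfloor>)"

definition cell :: "real \<Rightarrow> int ^ 'd \<Rightarrow> (real ^ 'd) set" where
  "cell K p = cbox (\<chi> j. of_int (p $ j) / K) (\<chi> j. (of_int (p $ j) + 1) / K)"

lemma cell_index_0 [simp]: "cell_index K 0 = 0"
  by (simp add: cell_index_def vec_eq_iff)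

lemma mem_cell_cell_index: "K > 0 \<Longrightarrow> y \<in> cell K (cell_index K y)"
  unfolding cell_def cell_index_def mem_box_cart
  by (auto simp: field_simps) linarith+

lemma cell_index_diff_le:
  assumes "K > 0"
  shows "\<bar>(cell_index K y - cell_index K z) $ j\<bar> \<le> \<lceil>K * norm (y - z)\<rceil>"
proof -
  have "\<bar>K * y $ j - K * z $ j\<bar> \<le> K * norm (y - z)"
    using assms component_le_norm_cart[of "y - z" j]
    by (simp add: abs_mult flip: right_diff_distrib)
  then show ?thesis
    unfolding cell_index_def
    using abs_floor_diff_le[of "K * y $ j" "K * z $ j"] ceiling_mono by fastforce
qed

lemma king_walk_between_cells:
  assumes "K > 0"
  shows "\<exists>w. set w \<subseteq> king_steps \<and> length w \<le> K * norm (y - z) + 1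
           \<and> sum_list w = cell_index K y - cell_index K z"
proof -
  define m where "m = nat \<lceil>K * norm (y - z)\<rceil>"
  have "\<bar>(cell_index K y - cell_index K z) $ j\<bar> \<le> int m" for j
    using cell_index_diff_le[OF assms, of y z j] unfolding m_def by linarith
  moreover have "m \<le> K * norm (y - z) + 1"
    using assms ceiling_correct[of "K * norm (y - z)"] unfolding m_def by (simp add: of_nat_nat)
  ultimately show ?thesis using king_walk_exists by metis
qed

lemma shadowing_walk_exists:
  fixes z :: "real ^ 'd"
  assumes "K > 0"
  shows "\<exists>w. set w \<subseteq> king_steps \<and> length w \<le> K * path_length (z # ys) + length ys
           \<and> (\<forall>y\<in>set ys. cell_index K y - cell_index K z \<in> visited w)"
proof (induction ys arbitrary: z)
  case (Cons y ys)
  obtain w1 where w1: "set w1 \<subseteq> king_steps" "length w1 \<le> K * norm (y - z) + 1"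
    "sum_list w1 = cell_index K y - cell_index K z"
    using king_walk_between_cells[OF assms] by blast
  obtain w2 where w2: "set w2 \<subseteq> king_steps" "length w2 \<le> K * path_length (y # ys) + length ys"
    "\<forall>y'\<in>set ys. cell_index K y' - cell_index K y \<in> visited w2"
    using Cons.IH[of y] by blast
  have "cell_index K y' - cell_index K z \<in> visited (w1 @ w2)" if "y' \<in> set (y # ys)" for y'
  proof (cases "y' = y")
    case True
    have "sum_list w1 \<in> visited (w1 @ w2)"
      using sum_list_mem_visited visited_append_left by blast
    with True w1(3) show ?thesis
      by simp
  next
    case False
    then have "sum_list w1 + (cell_index K y' - cell_index K y) \<in> visited (w1 @ w2)"
      using that w2(3) by (simp add: visited_append_right)
    then show ?thesis
      using w1(3) by (simp add: algebra_simps)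
  qed
  moreover have "length (w1 @ w2) \<le> K * path_length (z # y # ys) + length (y # ys)"
    using w1(2) w2(2) by (simp add: distrib_left)
  moreover have "set (w1 @ w2) \<subseteq> king_steps"
    using w1(1) w2(1) by simp
  ultimately show ?case
    by blast
qed simp

lemma visiting_walk_exists:
  fixes ys :: "(real ^ 'd) list"
  assumes "K > 0" and "K * path_length (0 # ys) \<le> length ys"
  shows "\<exists>w \<in> king_walks (2 * length ys). \<forall>y\<in>set ys. cell_index K y \<in> visited w"
proof -
  obtain w where w: "set w \<subseteq> king_steps" "length w \<le> K * path_length (0 # ys) + length ys"
    "\<forall>y\<in>set ys. cell_index K y \<in> visited w"
    using shadowing_walk_exists[OF assms(1), of 0 ys] by auto
  define w' where "w' = w @ replicate (2 * length ys - length w) 0"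
  have "length w \<le> 2 * length ys"
    using w(2) assms(2) by linarith
  moreover have "(0 :: int ^ 'd) \<in> king_steps"
    by (simp add: king_steps_def)
  ultimately have "w' \<in> king_walks (2 * length ys)"
    using w(1) by (auto simp: king_walks_def w'_def)
  moreover have "visited w \<subseteq> visited w'"
    unfolding w'_def by (rule visited_append_left)
  ultimately show ?thesis
    using w(3) by blast
qed

definition walk_region :: "real \<Rightarrow> (int ^ 'd) list \<Rightarrow> (real ^ 'd) set" where
  "walk_region K w = (\<Union>p\<in>visited w. cell K p)"

lemma walk_region_sets: "walk_region K w \<in> sets lborel"
  unfolding walk_region_def cell_def using finite_visited by (auto intro!: sets.finite_UN)

lemma bounded_walk_region: "bounded (walk_region K w)"
  unfolding walk_region_def cell_def using finite_visited by (intro bounded_UN) auto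

lemma emeasure_cell:
  fixes p :: "int ^ 'd"
  assumes "K > 0"
  shows "emeasure lborel (cell K p) = ennreal ((1 / K) ^ CARD('d))"
proof -
  let ?l = "\<chi> j. of_int (p $ j) / K" and ?u = "\<chi> j. (of_int (p $ j) + 1) / K"
  have "?l \<in> cbox ?l ?u"
    using assms by (auto simp: mem_box_cart divide_right_mono)
  then have "measure lborel (cbox ?l ?u) = (\<Prod>j\<in>UNIV. (of_int (p $ j) + 1) / K - of_int (p $ j) / K)"
    by (subst content_cbox_cart) auto
  also have "\<dots> = (1 / K) ^ CARD('d)"
    using assms by (simp add: field_simps)
  finally have "measure lborel (cell K p) = (1 / K) ^ CARD('d)"
    unfolding cell_def .
  moreover have "emeasure lborel (cell K p) = ennreal (measure lborel (cell K p))"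
    unfolding cell_def using emeasure_lborel_cbox_finite
    by (intro emeasure_eq_ennreal_measure) (simp add: less_top)
  ultimately show ?thesis
    by simp
qed

lemma emeasure_walk_region_le:
  fixes w :: "(int ^ 'd) list"
  assumes "K > 0"
  shows "emeasure lborel (walk_region K w) \<le> ennreal ((length w + 1) * (1 / K) ^ CARD('d))"
proof -
  have "emeasure lborel (walk_region K w) \<le> (\<Sum>p\<in>visited w. emeasure lborel (cell K p))"
    unfolding walk_region_def cell_def using finite_visited
    by (intro emeasure_subadditive_finite) auto
  also have "\<dots> = ennreal (card (visited w) * (1 / K) ^ CARD('d))"
    using assms by (simp add: emeasure_cell ennreal_of_nat_eq_real_of_nat ennreal_mult)
  also have "\<dots> \<le> ennreal ((length w + 1) * (1 / K) ^ CARD('d))"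
    using card_visited_le[of w] assms by (intro ennreal_leI mult_right_mono) auto
  finally show ?thesis .
qed

section \<open>Poisson point processes\<close>

lemma poisson_point_process_prob_space:
  "poisson_point_process M Xi mu \<Longrightarrow> prob_space M"
  by (simp add: poisson_point_process_def)

lemma poisson_point_process_AE_finite:
  "poisson_point_process M Xi mu \<Longrightarrow> B \<in> sets mu \<Longrightarrow> emeasure mu B < \<infinity>
    \<Longrightarrow> AE \<omega> in M. finite (Xi \<omega> \<inter> B)"
  by (simp add: poisson_point_process_def)

lemma poisson_point_process_count_pred:
  assumes "poisson_point_process M Xi mu" "B \<in> sets mu" "emeasure mu B < \<infinity>"
  shows "{\<omega> \<in> space M. P (card (Xi \<omega> \<inter> B))} \<in> sets M"
proof -
  have "(\<lambda>\<omega>. card (Xi \<omega> \<inter> B)) \<in> measurable M (count_space UNIV)"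
    using assms unfolding poisson_point_process_def by blast
  then have "Measurable.pred M (\<lambda>\<omega>. P (card (Xi \<omega> \<inter> B)))"
    by (rule measurable_compose) simp
  then show ?thesis
    by (simp add: pred_def)
qed

lemma poisson_point_process_prob_count_ge_le:
  assumes P: "poisson_point_process M Xi mu" and B: "B \<in> sets mu" "emeasure mu B < \<infinity>"
  shows "measure M {\<omega> \<in> space M. n \<le> card (Xi \<omega> \<inter> B)} \<le> measure mu B ^ n / fact n"
proof -
  interpret prob_space M
    using P by (rule poisson_point_process_prob_space)
  define N where "N \<omega> = card (Xi \<omega> \<inter> B)" for \<omega>
  define m where "m = measure mu B"
  have N_sets: "{\<omega> \<in> space M. Q (N \<omega>)} \<in> events" for Q
    unfolding N_def using poisson_point_process_count_pred[OF P B] .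
  have "{\<omega> \<in> space M. N \<omega> < n} = (\<Union>k<n. {\<omega> \<in> space M. N \<omega> = k})"
    by auto
  then have "prob {\<omega> \<in> space M. N \<omega> < n} = (\<Sum>k<n. prob {\<omega> \<in> space M. N \<omega> = k})"
    using N_sets by (auto intro!: finite_measure_finite_Union simp: disjoint_family_on_def)
  also have "\<dots> = exp (- m) * (\<Sum>k<n. m ^ k / fact k)"
    using P B unfolding poisson_point_process_def N_def m_def
    by (simp add: sum_distrib_left mult.commute)
  moreover have "{\<omega> \<in> space M. n \<le> N \<omega>} = space M - {\<omega> \<in> space M. N \<omega> < n}"
    by auto
  ultimately have "prob {\<omega> \<in> space M. n \<le> N \<omega>} = 1 - exp (- m) * (\<Sum>k<n. m ^ k / fact k)"
    using prob_compl[OF N_sets, of "\<lambda>k. k < n"] by simp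
  also have "\<dots> \<le> m ^ n / fact n"
    unfolding m_def by (rule poisson_tail_le) simp
  finally show ?thesis
    unfolding N_def m_def .
qed

lemma poisson_point_process_AE_disjoint:
  assumes P: "poisson_point_process M Xi mu" and B: "B \<in> sets mu" "emeasure mu B = 0"
  shows "AE \<omega> in M. Xi \<omega> \<inter> B = {}"
proof -
  interpret prob_space M
    using P by (rule poisson_point_process_prob_space)
  have "prob {\<omega> \<in> space M. card (Xi \<omega> \<inter> B) = 0} = 1"
    using P B unfolding poisson_point_process_def by (simp add: measure_def)
  then have "AE \<omega> in M. \<omega> \<in> {\<omega> \<in> space M. card (Xi \<omega> \<inter> B) = 0}"
    by (rule AE_prob_1)
  moreover have "AE \<omega> in M. finite (Xi \<omega> \<inter> B)"
    using P B by (intro poisson_point_process_AE_finite) auto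
  ultimately show ?thesis
    by eventually_elim auto
qed

abbreviation unit_marked_lebesgue :: "('a::euclidean_space \<times> real) measure" where
  "unit_marked_lebesgue \<equiv> lborel \<Otimes>\<^sub>M return borel 1"

lemma Times_UNIV_in_unit_marked_lebesgue:
  "A \<in> sets borel \<Longrightarrow> A \<times> UNIV \<in> sets unit_marked_lebesgue"
  by (simp add: pair_measureI)

lemma emeasure_unit_marked_lebesgue_Times_UNIV:
  "A \<in> sets borel \<Longrightarrow> emeasure unit_marked_lebesgue (A \<times> UNIV) = emeasure lborel A"
  by (simp add: emeasure_pair_return_Times)

lemma AE_marks_le_1:
  assumes "poisson_point_process M Xi unit_marked_lebesgue"
  shows "AE \<omega> in M. \<forall>x t. (x, t) \<in> Xi \<omega> \<longrightarrow> t \<le> 1"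
proof -
  have "AE \<omega> in M. Xi \<omega> \<inter> UNIV \<times> {1<..} = {}"
    using assms by (rule poisson_point_process_AE_disjoint)
      (simp_all add: pair_measureI emeasure_pair_return_Times)
  then show ?thesis
    by eventually_elim (auto simp: not_le)
qed

lemma AE_locally_finite:
  fixes Xi :: "'b \<Rightarrow> ('a::euclidean_space \<times> real) set"
  assumes "poisson_point_process M Xi unit_marked_lebesgue"
  shows "AE \<omega> in M. \<forall>B. bounded B \<longrightarrow> finite (Xi \<omega> \<inter> B \<times> UNIV)"
proof -
  have "AE \<omega> in M. finite (Xi \<omega> \<inter> cball 0 (real r) \<times> UNIV)" for r :: nat
    using assms Times_UNIV_in_unit_marked_lebesgue emeasure_lborel_cball_finite
    by (intro poisson_point_process_AE_finite) (auto simp: emeasure_unit_marked_lebesgue_Times_UNIV)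
  then have "AE \<omega> in M. \<forall>r::nat. finite (Xi \<omega> \<inter> cball 0 (real r) \<times> UNIV)"
    by (simp add: AE_all_countable)
  then show ?thesis
  proof eventually_elim
    case (elim \<omega>)
    show ?case
    proof (intro allI impI)
      fix B :: "'a set" assume "bounded B"
      then obtain e where "\<forall>x\<in>B. norm x \<le> e"
        unfolding bounded_iff by blast
      moreover obtain r :: nat where "e \<le> r"
        using real_arch_simple by blast
      ultimately have "Xi \<omega> \<inter> B \<times> UNIV \<subseteq> Xi \<omega> \<inter> cball 0 (real r) \<times> UNIV"
        by fastforce
      then show "finite (Xi \<omega> \<inter> B \<times> UNIV)"
        using elim finite_subset by blast
    qed
  qed
qed

lemma walk_region_Times_UNIV_sets:
  "walk_region K w \<times> UNIV \<in> sets unit_marked_lebesgue"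
  using walk_region_sets by (intro Times_UNIV_in_unit_marked_lebesgue) simp

lemma emeasure_walk_region_Times_UNIV_le:
  fixes w :: "(int ^ 'd) list"
  assumes "K > 0"
  shows "emeasure unit_marked_lebesgue (walk_region K w \<times> UNIV)
           \<le> ennreal ((length w + 1) * (1 / K) ^ CARD('d))"
proof -
  have "walk_region K w \<in> sets borel"
    using walk_region_sets by simp
  then show ?thesis
    using emeasure_walk_region_le[OF assms, of w] by (simp add: emeasure_unit_marked_lebesgue_Times_UNIV)
qed

lemma walk_region_count_pred:
  fixes Xi :: "'b \<Rightarrow> ((real ^ 'd) \<times> real) set"
  assumes "poisson_point_process M Xi unit_marked_lebesgue" and "K > 0"
  shows "{\<omega> \<in> space M. P (card (Xi \<omega> \<inter> walk_region K w \<times> UNIV))} \<in> sets M"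
proof -
  have "emeasure unit_marked_lebesgue (walk_region K w \<times> UNIV) < \<infinity>"
    using emeasure_walk_region_Times_UNIV_le[OF assms(2), of w] by (rule le_less_trans) simp
  then show ?thesis
    using poisson_point_process_count_pred[OF assms(1) walk_region_Times_UNIV_sets] by blast
qed

lemma prob_walk_region_count_ge_le:
  fixes Xi :: "'b \<Rightarrow> ((real ^ 'd) \<times> real) set"
  assumes P: "poisson_point_process M Xi unit_marked_lebesgue"
    and "K > 0" and "w \<in> king_walks (2 * m)"
  shows "measure M {\<omega> \<in> space M. m \<le> card (Xi \<omega> \<inter> walk_region K w \<times> UNIV)}
           \<le> (real (2 * m + 1) * (1 / K) ^ CARD('d)) ^ m / fact m"
proof -
  let ?B = "walk_region K w \<times> UNIV"
  have B_le: "emeasure unit_marked_lebesgue ?B \<le> ennreal ((2 * m + 1) * (1 / K) ^ CARD('d))"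
    using emeasure_walk_region_Times_UNIV_le[OF \<open>K > 0\<close>, of w] assms(3)
    by (simp add: king_walks_def)
  then have "emeasure unit_marked_lebesgue ?B < \<infinity>"
    by (rule le_less_trans) simp
  then have "measure M {\<omega> \<in> space M. m \<le> card (Xi \<omega> \<inter> ?B)}
               \<le> measure unit_marked_lebesgue ?B ^ m / fact m"
    using P walk_region_Times_UNIV_sets by (intro poisson_point_process_prob_count_ge_le)
  also have "\<dots> \<le> (real (2 * m + 1) * (1 / K) ^ CARD('d)) ^ m / fact m"
  proof (intro divide_right_mono power_mono)
    show "measure unit_marked_lebesgue ?B \<le> real (2 * m + 1) * (1 / K) ^ CARD('d)"
      using B_le \<open>K > 0\<close> unfolding measure_def by (intro enn2real_leI) auto
  qed auto
  finally show ?thesis .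
qed

section \<open>Heavy walks\<close>

definition has_heavy_walk :: "real \<Rightarrow> ((real ^ 'd) \<times> real) set \<Rightarrow> bool" where
  "has_heavy_walk K xi \<longleftrightarrow>
     (\<exists>n. \<exists>w \<in> king_walks (2 * Suc n). Suc n \<le> card (xi \<inter> walk_region K w \<times> UNIV))"

lemma has_heavy_walk_if_ratio_ge:
  fixes xi :: "((real ^ 'd) \<times> real) set"
  assumes "K > 0"
    and marks: "\<And>x t. (x, t) \<in> xi \<Longrightarrow> t \<le> 1"
    and fin: "\<And>B. bounded B \<Longrightarrow> finite (xi \<inter> B \<times> UNIV)"
    and p: "p \<in> origin_paths" and ratio: "K \<le> path_weight xi p / path_length p"
  shows "has_heavy_walk K xi"
proof -
  define ys where "ys = filter (\<lambda>x. x \<in> fst ` xi) p"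
  have short: "K * path_length (0 # ys) \<le> length ys" and "ys \<noteq> []"
    unfolding ys_def using marked_points_of_heavy_path[OF \<open>K > 0\<close> marks p ratio] by auto
  then obtain n where n: "length ys = Suc n"
    by (cases ys) auto
  obtain w where w: "w \<in> king_walks (2 * length ys)" "\<forall>y\<in>set ys. cell_index K y \<in> visited w"
    using visiting_walk_exists[OF \<open>K > 0\<close> short] by blast
  have "set ys \<subseteq> walk_region K w"
    using w(2) mem_cell_cell_index[OF \<open>K > 0\<close>] unfolding walk_region_def by blast
  then have "card (set ys) \<le> card (xi \<inter> walk_region K w \<times> UNIV)"
    by (intro card_le_card_Int_Times_UNIV fin bounded_walk_region) (auto simp: ys_def)
  moreover have "card (set ys) = length ys"
    using p by (intro distinct_card) (simp add: ys_def origin_paths_def)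
  ultimately show ?thesis
    unfolding has_heavy_walk_def using w(1) n by (intro exI[of _ n] bexI[of _ w]) simp_all
qed

lemma greedy_S_le_dyadic_sum:
  fixes xi :: "((real ^ 'd) \<times> real) set"
  assumes marks: "\<And>x t. (x, t) \<in> xi \<Longrightarrow> t \<le> 1"
    and fin: "\<And>B. bounded B \<Longrightarrow> finite (xi \<inter> B \<times> UNIV)"
  shows "greedy_S xi \<le> 1 + (\<Sum>j. ennreal (2 ^ Suc j) * of_bool (has_heavy_walk (2 ^ j) xi))"
  unfolding greedy_S_def
proof (rule SUP_least)
  fix p :: "(real ^ 'd) list"
  assume p: "p \<in> origin_paths"
  define s where "s = path_weight xi p / path_length p"
  define h where "h j = ennreal (2 ^ Suc j) * of_bool (has_heavy_walk (2 ^ j) xi)" for j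
  have "ennreal s \<le> 1 + suminf h"
  proof (cases "s < 1")
    case True
    then have "ennreal s \<le> 1"
      using ennreal_leI[of s 1] by simp
    then show ?thesis
      by (rule order_trans) simp
  next
    case False
    then obtain j where j: "2 ^ j \<le> s" "s < 2 ^ Suc j"
      using ex_dyadic_bracket[of s] by auto
    have "has_heavy_walk (2 ^ j) xi"
      using j(1) unfolding s_def by (intro has_heavy_walk_if_ratio_ge[OF _ marks fin p]) auto
    then have "ennreal s \<le> h j"
      using j(2) by (simp add: h_def ennreal_leI)
    also have "\<dots> \<le> suminf h"
      using sum_le_suminf[of h "{j}"] by (simp add: summableI)
    finally show ?thesis
      by (rule order_trans) simp
  qed
  then show "ennreal (path_weight xi p / path_length p)
               \<le> 1 + (\<Sum>j. ennreal (2 ^ Suc j) * of_bool (has_heavy_walk (2 ^ j) xi))"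
    unfolding s_def h_def .
qed

lemma card_king_walks_mult_tail_le:
  assumes "K \<ge> 9" "CARD('d) \<ge> 2" "m > 0"
  shows "card (king_walks (2 * m) :: (int ^ 'd) list set)
           * ((real (2 * m + 1) * (1 / K) ^ CARD('d)) ^ m / fact m) \<le> (729 / K\<^sup>2) ^ m"
proof -
  let ?d = "CARD('d)"
  have "real (card (king_walks (2 * m) :: (int ^ 'd) list set)) \<le> 3 ^ (?d * (2 * m))"
    using card_king_walks_le[of "2 * m", where 'd='d] by (simp flip: of_nat_power)
  also have "\<dots> = (3 ^ 2) ^ (?d * m)"
    by (subst power_mult[symmetric]) (simp add: ac_simps)
  also have "\<dots> = (9 ^ ?d) ^ m"
    by (simp add: power_mult)
  finally have "card (king_walks (2 * m) :: (int ^ 'd) list set)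
                  * ((real (2 * m + 1) * (1 / K) ^ ?d) ^ m / fact m)
                \<le> (9 ^ ?d) ^ m * (3 * exp 1 * (1 / K) ^ ?d) ^ m"
    using assms by (intro mult_mono power_linear_div_fact_le) auto
  also have "\<dots> = (3 * exp 1 * (9 / K) ^ ?d) ^ m"
    by (simp add: power_mult_distrib power_divide ac_simps)
  also have "\<dots> \<le> (729 / K\<^sup>2) ^ m"
  proof (rule power_mono)
    \<comment> \<open>the only use of \<open>d \<ge> 2\<close>\<close>
    have "(9 / K) ^ ?d \<le> (9 / K) ^ 2"
      using assms by (intro power_decreasing) auto
    then have "3 * exp 1 * (9 / K) ^ ?d \<le> 3 * 3 * (9 / K) ^ 2"
      using assms exp_le by (intro mult_mono) auto
    then show "3 * exp 1 * (9 / K) ^ ?d \<le> 729 / K\<^sup>2"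
      by (simp add: power_divide)
  qed (use assms in simp)
  finally show ?thesis .
qed

lemma heavy_walk_of_size_events:
  fixes Xi :: "'b \<Rightarrow> ((real ^ 'd) \<times> real) set"
  assumes "poisson_point_process M Xi unit_marked_lebesgue" and "K > 0"
  shows "{\<omega> \<in> space M. \<exists>w \<in> king_walks m. n \<le> card (Xi \<omega> \<inter> walk_region K w \<times> UNIV)}
           \<in> sets M"
proof -
  have "{\<omega> \<in> space M. \<exists>w \<in> king_walks m. n \<le> card (Xi \<omega> \<inter> walk_region K w \<times> UNIV)}
          = (\<Union>w \<in> king_walks m.
               {\<omega> \<in> space M. n \<le> card (Xi \<omega> \<inter> walk_region K w \<times> UNIV)})"
    by auto
  then show ?thesis
    using walk_region_count_pred[OF assms] finite_king_walks by auto
qed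

lemma has_heavy_walk_events:
  fixes Xi :: "'b \<Rightarrow> ((real ^ 'd) \<times> real) set"
  assumes "poisson_point_process M Xi unit_marked_lebesgue" and "K > 0"
  shows "{\<omega> \<in> space M. has_heavy_walk K (Xi \<omega>)} \<in> sets M"
proof -
  have "{\<omega> \<in> space M. has_heavy_walk K (Xi \<omega>)} = (\<Union>n. {\<omega> \<in> space M.
          \<exists>w \<in> king_walks (2 * Suc n). Suc n \<le> card (Xi \<omega> \<inter> walk_region K w \<times> UNIV)})"
    unfolding has_heavy_walk_def by auto
  then show ?thesis
    using heavy_walk_of_size_events[OF assms] by auto
qed

lemma prob_heavy_walk_of_size_le:
  fixes Xi :: "'b \<Rightarrow> ((real ^ 'd) \<times> real) set"
  assumes P: "poisson_point_process M Xi unit_marked_lebesgue"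
    and "K \<ge> 9" and "CARD('d) \<ge> 2"
  shows "emeasure M {\<omega> \<in> space M. \<exists>w \<in> king_walks (2 * Suc n).
             Suc n \<le> card (Xi \<omega> \<inter> walk_region K w \<times> UNIV)} \<le> ennreal ((729 / K\<^sup>2) ^ Suc n)"
proof -
  interpret prob_space M
    using P by (rule poisson_point_process_prob_space)
  define A where "A w = {\<omega> \<in> space M. Suc n \<le> card (Xi \<omega> \<inter> walk_region K w \<times> UNIV)}"
    for w :: "(int ^ 'd) list"
  define T where "T = (real (2 * Suc n + 1) * (1 / K) ^ CARD('d)) ^ Suc n / fact (Suc n)"
  have T_nonneg: "0 \<le> T"
    unfolding T_def using \<open>K \<ge> 9\<close> by simp
  have A_sets: "A w \<in> events" for w
    unfolding A_def using P \<open>K \<ge> 9\<close> by (intro walk_region_count_pred) auto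
  have "{\<omega> \<in> space M. \<exists>w \<in> king_walks (2 * Suc n).
           Suc n \<le> card (Xi \<omega> \<inter> walk_region K w \<times> UNIV)} = (\<Union>w \<in> king_walks (2 * Suc n). A w)"
    by (auto simp: A_def)
  also have "emeasure M \<dots> \<le> (\<Sum>w \<in> king_walks (2 * Suc n). emeasure M (A w))"
    using A_sets finite_king_walks by (intro emeasure_subadditive_finite) auto
  also have "\<dots> \<le> (\<Sum>w \<in> (king_walks (2 * Suc n) :: (int ^ 'd) list set). ennreal T)"
  proof (rule sum_mono)
    fix w :: "(int ^ 'd) list"
    assume "w \<in> king_walks (2 * Suc n)"
    then show "emeasure M (A w) \<le> ennreal T"
      unfolding A_def T_def emeasure_eq_measure using P \<open>K \<ge> 9\<close>
      by (intro ennreal_leI prob_walk_region_count_ge_le) auto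
  qed
  also have "\<dots> = ennreal (card (king_walks (2 * Suc n) :: (int ^ 'd) list set) * T)"
    using T_nonneg by (simp add: ennreal_of_nat_eq_real_of_nat ennreal_mult)
  also have "\<dots> \<le> ennreal ((729 / K\<^sup>2) ^ Suc n)"
    unfolding T_def using assms(2,3) by (intro ennreal_leI card_king_walks_mult_tail_le) auto
  finally show ?thesis .
qed

lemma prob_has_heavy_walk_le:
  fixes Xi :: "'b \<Rightarrow> ((real ^ 'd) \<times> real) set"
  assumes P: "poisson_point_process M Xi unit_marked_lebesgue"
    and "K \<ge> 1" and "CARD('d) \<ge> 2"
  shows "emeasure M {\<omega> \<in> space M. has_heavy_walk K (Xi \<omega>)} \<le> ennreal (1600 / K\<^sup>2)"
proof (cases "K < 40")
  case True
  interpret prob_space M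
    using P by (rule poisson_point_process_prob_space)
  have "K\<^sup>2 \<le> 40\<^sup>2"
    using True \<open>K \<ge> 1\<close> by (intro power_mono) auto
  then have "1 \<le> ennreal (1600 / K\<^sup>2)"
    using \<open>K \<ge> 1\<close> ennreal_leI[of 1] by simp
  then show ?thesis
    by (rule order_trans[OF emeasure_le_1])
next
  case False
  define q where "q = 729 / K\<^sup>2"
  define H where "H n = {\<omega> \<in> space M. \<exists>w \<in> king_walks (2 * Suc n).
                           Suc n \<le> card (Xi \<omega> \<inter> walk_region K w \<times> UNIV)}" for n
  have "40\<^sup>2 \<le> K\<^sup>2"
    using False by (intro power_mono) auto
  then have q: "0 \<le> q" "q \<le> 1 / 2"
    unfolding q_def by (auto simp: divide_le_eq)
  have H_sets: "H n \<in> sets M" for n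
    unfolding H_def using heavy_walk_of_size_events[OF P] False by simp
  have "{\<omega> \<in> space M. has_heavy_walk K (Xi \<omega>)} = (\<Union>n. H n)"
    unfolding has_heavy_walk_def H_def by auto
  also have "emeasure M \<dots> \<le> (\<Sum>n. emeasure M (H n))"
    using H_sets by (intro emeasure_subadditive_countably) auto
  also have "\<dots> \<le> (\<Sum>n. ennreal (q ^ Suc n))"
    unfolding H_def q_def using P False assms(3)
    by (intro suminf_le prob_heavy_walk_of_size_le) auto
  also have "\<dots> = ennreal (q / (1 - q))"
    using sums_mult[OF geometric_sums[of q], of q] q by (intro suminf_ennreal_eq) auto
  also have "\<dots> \<le> ennreal (1600 / K\<^sup>2)"
  proof (intro ennreal_leI)
    have "q \<le> 2 * q * (1 - q)"
      using mult_left_mono[of "2 * q" 1 q] q by (simp add: algebra_simps)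
    then have "q / (1 - q) \<le> 2 * q"
      using q by (simp add: divide_le_eq)
    moreover have "2 * q \<le> 1600 / K\<^sup>2"
      unfolding q_def by (simp add: divide_right_mono)
    ultimately show "q / (1 - q) \<le> 1600 / K\<^sup>2"
      by linarith
  qed
  finally show ?thesis .
qed

theorem lemma2p1:
  fixes M :: "'b measure"
    and Xi :: "'b \<Rightarrow> ((real ^ 'd) \<times> real) set"
  assumes "CARD('d) \<ge> 2"
    and "poisson_point_process M Xi (lborel \<Otimes>\<^sub>M return borel (1::real))"
  shows "\<exists>g \<in> borel_measurable M.
           (AE \<omega> in M. greedy_S (Xi \<omega>) \<le> g \<omega>) \<and> (\<integral>\<^sup>+ \<omega>. g \<omega> \<partial>M) < \<infinity>"
proof -
  note P = assms(2)
  interpret prob_space M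
    using P by (rule poisson_point_process_prob_space)
  define E where "E j = {\<omega> \<in> space M. has_heavy_walk (2 ^ j) (Xi \<omega>)}" for j :: nat
  define f where "f \<omega> = (\<Sum>j. ennreal (2 ^ Suc j) * indicator (E j) \<omega>)" for \<omega>
  have E_sets [measurable]: "E j \<in> sets M" for j
    unfolding E_def using P by (rule has_heavy_walk_events) simp
  have [measurable]: "f \<in> borel_measurable M"
    unfolding f_def by measurable
  have "AE \<omega> in M. greedy_S (Xi \<omega>) \<le> 1 + f \<omega>"
    using AE_marks_le_1[OF P] AE_locally_finite[OF P] AE_space
  proof eventually_elim
    case (elim \<omega>)
    then show ?case
      using greedy_S_le_dyadic_sum[of "Xi \<omega>"] by (simp add: f_def E_def indicator_def)
  qed
  moreover have "(\<integral>\<^sup>+\<omega>. f \<omega> \<partial>M) < \<infinity>"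
    unfolding f_def E_def using prob_has_heavy_walk_le[OF P _ assms(1)] E_sets[unfolded E_def]
    by (intro nn_integral_dyadic_indicator_sum_finite[of 1600]) auto
  then have "(\<integral>\<^sup>+\<omega>. 1 + f \<omega> \<partial>M) < \<infinity>"
    by (simp add: nn_integral_add emeasure_space_1)
  ultimately show ?thesis
    by (intro bexI[of _ "\<lambda>\<omega>. 1 + f \<omega>"]) auto
qed

end
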